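(* Let $X$ be a Banach space and $Y$ a normed space over $K$, $M>0$, $F:X\to Y$ a map, and $\{F_n\}$ a sequence of continuous $M$-contraction operators from $X$ into $Y$ such that $F_n(x)\to F(x)$ in norm for every $x\in X$. If there is a positive constant $L$ with $\|F_n(x_1+x_2)\|_Y\le L\|F_n(x_1)+F_n(x_2)\|_Y$ for every $n$ and all $x_1,x_2\in X$, then $\{F_n\}$ is uniformly norm bounded (there is $c>0$ with $\|F_n\|_{B(X,Y)}\le c$ for all $n$) and $F\in B(X,Y)$.
   Context: $K$ is $\mathbb{R}$ or $\mathbb{C}$; operators are arbitrary maps. $\|F\|_{B(X,Y)}=\max\left(\sup_{x\neq0,x\in X}\frac{\|F(x)\|_Y}{\|x\|_X},\ \|F(0)\|_Y\right)$ and $B(X,Y)$ is the set of maps with this finite. $F$ is an $M$-contraction operator if $\|F(kx)\|_Y\le M|k|\,\|F(x)\|_Y$ for every scalar $k\neq0$ and every $x\neq0$. *)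

theory Defs
  imports "HOL-Analysis.Analysis"
begin

definition complex_normed_scale :: "(complex \<Rightarrow> 'a::real_normed_vector \<Rightarrow> 'a) \<Rightarrow> bool" where
  "complex_normed_scale s \<longleftrightarrow>
     (\<forall>a x y. s a (x + y) = s a x + s a y) \<and>
     (\<forall>a b x. s (a + b) x = s a x + s b x) \<and>
     (\<forall>a b x. s a (s b x) = s (a * b) x) \<and>
     (\<forall>r x. s (complex_of_real r) x = r *\<^sub>R x) \<and>
     (\<forall>a x. norm (s a x) = cmod a * norm x)"

text \<open>The scalar field K is either R (embedded in C) with the real scaling,
or C with a complex normed-space structure.\<close>
definition scalar_field :: "complex set \<Rightarrow> (complex \<Rightarrow> 'a::real_normed_vector \<Rightarrow> 'a) \<Rightarrow> bool" where
  "scalar_field K s \<longleftrightarrow>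
     (K = \<real> \<and> s = (\<lambda>k x. Re k *\<^sub>R x)) \<or> (K = UNIV \<and> complex_normed_scale s)"

definition in_B :: "('a::real_normed_vector \<Rightarrow> 'b::real_normed_vector) \<Rightarrow> bool" where
  "in_B F \<longleftrightarrow> bdd_above {norm (F x) / norm x | x. x \<noteq> 0}"

definition B_norm :: "('a::real_normed_vector \<Rightarrow> 'b::real_normed_vector) \<Rightarrow> real" where
  "B_norm F = Sup (insert (norm (F 0)) {norm (F x) / norm x | x. x \<noteq> 0})"

definition M_contraction ::
  "complex set \<Rightarrow> (complex \<Rightarrow> 'a::real_normed_vector \<Rightarrow> 'a) \<Rightarrow> real \<Rightarrow> ('a \<Rightarrow> 'b::real_normed_vector) \<Rightarrow> bool" where
  "M_contraction K s M F \<longleftrightarrow>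
     (\<forall>k\<in>K. \<forall>x. k \<noteq> 0 \<longrightarrow> x \<noteq> 0 \<longrightarrow> norm (F (s k x)) \<le> M * cmod k * norm (F x))"

end

theory Submission
  imports Defs
begin

text \<open>Baire's theorem applied to the closed sets \<open>{x. \<forall>n. \<parallel>F\<^sub>n x\<parallel> \<le> m}\<close> gives a ball on which
all \<open>F\<^sub>n\<close> are uniformly bounded. Quasi-additivity moves this bound to a ball around the origin,
and the \<open>M\<close>-contraction property rescales it to a linear bound \<open>\<parallel>F\<^sub>n x\<parallel> \<le> D \<parallel>x\<parallel>\<close> with \<open>D\<close>
independent of \<open>n\<close>. This bound survives the pointwise limit, so \<open>F \<in> B(X,Y)\<close>.\<close>

lemma scalar_field_of_real:
  assumes "scalar_field K s"
  shows "complex_of_real r \<in> K" and "s (complex_of_real r) x = r *\<^sub>R x"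
  using assms unfolding scalar_field_def complex_normed_scale_def by auto

lemma M_contraction_scaleR:
  assumes "scalar_field K s" "M_contraction K s M F" "r \<noteq> 0" "x \<noteq> 0"
  shows "norm (F (r *\<^sub>R x)) \<le> M * \<bar>r\<bar> * norm (F x)"
  using assms scalar_field_of_real[OF assms(1)] unfolding M_contraction_def by force

lemma closed_cover_has_interior:
  fixes A :: "nat \<Rightarrow> 'a::complete_space set"
  assumes "\<And>m. closed (A m)" and "(\<Union>m. A m) = UNIV"
  obtains m where "interior (A m) \<noteq> {}"
proof -
  have "\<exists>m. interior (A m) \<noteq> {}"
  proof (rule ccontr)
    assume no_interior: "\<nexists>m. interior (A m) \<noteq> {}"
    have "euclidean interior_of \<Union>(range A) = {}"
    proof (rule Baire_category_alt)
      show "completely_metrizable_space (euclidean :: 'a topology) \<or>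
            locally_compact_space (euclidean :: 'a topology) \<and> regular_space (euclidean :: 'a topology)"
        using completely_metrizable_space_euclidean by blast
    qed (use assms(1) no_interior in \<open>auto simp: closed_closedin[symmetric]\<close>)
    then show False
      using assms(2) by simp
  qed
  then show thesis
    using that by blast
qed

lemma pointwise_bounded_imp_bounded_on_ball:
  fixes f :: "nat \<Rightarrow> 'a::banach \<Rightarrow> 'b::real_normed_vector"
  assumes "\<And>n. continuous_on UNIV (f n)" and "\<And>x. \<exists>B. \<forall>n. norm (f n x) \<le> B"
  obtains x0 r C where "r > 0" and "\<And>n y. y \<in> ball x0 r \<Longrightarrow> norm (f n y) \<le> C"
proof -
  define A where "A m = {x. \<forall>n. norm (f n x) \<le> real m}" for m :: nat
  have "closed (A m)" for m
    unfolding A_def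
    by (intro closed_Collect_all closed_Collect_le continuous_on_norm assms(1) continuous_on_const)
  moreover have "(\<Union>m. A m) = UNIV"
  proof -
    have "x \<in> A (nat \<lceil>B\<rceil>)" if "\<forall>n. norm (f n x) \<le> B" for x B
    proof -
      have "norm (f n x) \<le> real (nat \<lceil>B\<rceil>)" for n
        using that real_nat_ceiling_ge[of B] by (meson order_trans)
      then show ?thesis
        unfolding A_def by simp
    qed
    then have "x \<in> (\<Union>m. A m)" for x
      using assms(2)[of x] by blast
    then show ?thesis
      by blast
  qed
  ultimately obtain m where "interior (A m) \<noteq> {}"
    by (rule closed_cover_has_interior)
  then obtain x0 where "x0 \<in> interior (A m)"
    by blast
  then obtain r where "r > 0" "ball x0 r \<subseteq> interior (A m)"
    using open_contains_ball open_interior by blast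
  then have "\<forall>n. norm (f n y) \<le> real m" if "y \<in> ball x0 r" for y
    using that interior_subset[of "A m"] unfolding A_def by blast
  then show thesis
    using that \<open>r > 0\<close> by blast
qed

lemma quasi_additive_bounded_near_zero:
  assumes ball_bound: "\<And>y. y \<in> ball x0 r \<Longrightarrow> norm (g y) \<le> C"
    and "norm (g (- x0)) \<le> B"
    and quasi_additive: "\<And>x y. norm (g (x + y)) \<le> L * norm (g x + g y)"
    and "L \<ge> 0" and "norm y < r"
  shows "norm (g y) \<le> L * (C + B)"
proof -
  have "norm (g (x0 + y)) \<le> C"
    using ball_bound assms(5) by (simp add: dist_norm)
  have "norm (g y) = norm (g ((x0 + y) + (- x0)))"
    by simp
  also have "\<dots> \<le> L * norm (g (x0 + y) + g (- x0))"
    by (rule quasi_additive)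
  also have "\<dots> \<le> L * (C + B)"
    using \<open>norm (g (x0 + y)) \<le> C\<close> assms(2,4) norm_triangle_ineq[of "g (x0 + y)" "g (- x0)"]
    by (intro mult_left_mono) linarith+
  finally show ?thesis .
qed

lemma contraction_bounded_near_zero_imp_linear_bound:
  assumes contraction: "\<And>t x. t \<noteq> 0 \<Longrightarrow> x \<noteq> 0 \<Longrightarrow> norm (g (t *\<^sub>R x)) \<le> M * \<bar>t\<bar> * norm (g x)"
    and "M \<ge> 0" and "r > 0"
    and small: "\<And>y. norm y < r \<Longrightarrow> norm (g y) \<le> C"
    and "x \<noteq> 0"
  shows "norm (g x) \<le> 2 * M * C / r * norm x"
proof -
  define y where "y = (r / (2 * norm x)) *\<^sub>R x"
  have nx: "norm x > 0"
    using \<open>x \<noteq> 0\<close> by simp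
  have ny: "norm y = r / 2"
    unfolding y_def using nx \<open>r > 0\<close> by simp
  have x_eq: "x = (2 * norm x / r) *\<^sub>R y"
    unfolding y_def using nx \<open>r > 0\<close> by simp
  have "norm (g x) \<le> M * \<bar>2 * norm x / r\<bar> * norm (g y)"
    using contraction[of "2 * norm x / r" y] x_eq ny nx \<open>r > 0\<close> by auto
  also have "\<dots> \<le> M * \<bar>2 * norm x / r\<bar> * C"
    using small[of y] ny \<open>r > 0\<close> \<open>M \<ge> 0\<close> by (intro mult_left_mono) auto
  also have "\<dots> = 2 * M * C / r * norm x"
    using nx \<open>r > 0\<close> by simp
  finally show ?thesis .
qed

lemma linear_bound_imp_in_B:
  assumes "\<And>x. x \<noteq> 0 \<Longrightarrow> norm (F x) \<le> D * norm x"
  shows "in_B F"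
  unfolding in_B_def
  using assms by (intro bdd_aboveI[of _ D]) (auto simp: divide_le_eq)

lemma B_norm_le_linear_bound:
  assumes "\<And>x. x \<noteq> 0 \<Longrightarrow> norm (F x) \<le> D * norm x" and "norm (F 0) \<le> B"
  shows "B_norm F \<le> max D B"
  unfolding B_norm_def
  using assms by (intro cSup_least) (auto simp: divide_le_eq intro: max.coboundedI1 max.coboundedI2)

theorem corollary1:
  fixes K :: "complex set"
    and sX :: "complex \<Rightarrow> 'a::banach \<Rightarrow> 'a"
    and sY :: "complex \<Rightarrow> 'b::real_normed_vector \<Rightarrow> 'b"
    and M L :: real
    and F :: "'a \<Rightarrow> 'b"
    and Fn :: "nat \<Rightarrow> 'a \<Rightarrow> 'b"
  assumes "scalar_field K sX" and "scalar_field K sY"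
    and "M > 0"
    and "\<And>n. continuous_on UNIV (Fn n)"
    and "\<And>n. M_contraction K sX M (Fn n)"
    and "\<And>x. (\<lambda>n. Fn n x) \<longlonglongrightarrow> F x"
    and "L > 0"
    and "\<And>n x1 x2. norm (Fn n (x1 + x2)) \<le> L * norm (Fn n x1 + Fn n x2)"
  shows "(\<exists>c>0. \<forall>n. in_B (Fn n) \<and> B_norm (Fn n) \<le> c) \<and> in_B F"
proof -
  have pointwise_bound: "\<exists>B. \<forall>n. norm (Fn n x) \<le> B" for x
    using convergent_imp_Bseq[OF convergentI[OF assms(6)[of x]]] unfolding Bseq_def by blast
  obtain r x0 C where "r > 0" and ball_bound: "\<And>n y. y \<in> ball x0 r \<Longrightarrow> norm (Fn n y) \<le> C"
    using pointwise_bounded_imp_bounded_on_ball[OF assms(4) pointwise_bound] by metis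
  obtain B where B: "\<And>n. norm (Fn n (- x0)) \<le> B"
    using pointwise_bound by blast
  obtain B0 where B0: "\<And>n. norm (Fn n 0) \<le> B0"
    using pointwise_bound by blast
  have small: "norm (Fn n y) \<le> L * (C + B)" if "norm y < r" for n y
    using quasi_additive_bounded_near_zero[of x0 r "Fn n" C B L y] ball_bound B assms(7,8) that
    by simp
  define D where "D = 2 * M * (L * (C + B)) / r"
  have linear: "norm (Fn n x) \<le> D * norm x" if "x \<noteq> 0" for n x
    unfolding D_def
    using contraction_bounded_near_zero_imp_linear_bound[of "Fn n" M r "L * (C + B)" x]
      M_contraction_scaleR[OF assms(1,5)] assms(3) \<open>r > 0\<close> small that
    by simp
  have "norm (F x) \<le> D * norm x" if "x \<noteq> 0" for x
    using LIMSEQ_le_const2[OF tendsto_norm[OF assms(6)[of x]]] linear[OF that] by blast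
  then have "in_B F"
    by (rule linear_bound_imp_in_B)
  moreover have "in_B (Fn n) \<and> B_norm (Fn n) \<le> max (max D B0) 1" for n
    using linear_bound_imp_in_B[of "Fn n" D] B_norm_le_linear_bound[of "Fn n" D B0] linear B0
    by (auto intro: max.coboundedI1)
  ultimately show ?thesis
    by (intro conjI exI[of _ "max (max D B0) 1"]) auto
qed

end
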